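(* Let $G$ be a finite group of even order and let $\mathcal{F}$ be a $1$-rotational $k$-factorization of $K_{\overline{G}}$. Then for every $F\in\mathcal{F}$, the $G$-stabilizer of $F$ contains at least one element of every conjugacy class of $G$ that contains involutions.
   Context: For a finite group $G$, $\overline{G}=G\cup\{\infty\}$, and $K_V$ denotes the complete graph on vertex set $V$. $G$ acts on $\overline{G}$ by right multiplication, with $\infty g=\infty$ for all $g\in G$; for a subgraph $F$ of $K_{\overline{G}}$ and $g\in G$, $Fg$ is the graph obtained by replacing every vertex $v$ by $vg$. A $k$-factor of $K_V$ is a spanning $k$-regular subgraph, and a $k$-factorization is a set of $k$-factors whose edge sets partition the edge set of $K_V$. A $k$-factorization $\mathcal{F}$ of $K_{\overline{G}}$ is $1$-rotational if $Fg\in\mathcal{F}$ for all $F\in\mathcal{F}$ and $g\in G$. The $G$-stabilizer of a factor $F$ is $\{g\in G: Fg=F\}$. An involution is an element of order $2$. *)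

theory Defs
  imports "HOL-Algebra.Algebra"
begin

text \<open>Vertices of K over G-bar: Some g for g in G, None for infinity.
  A spanning subgraph of the complete graph is represented by its edge set
  (edges are 2-element sets of vertices).\<close>

definition vert :: "('a, 'b) monoid_scheme \<Rightarrow> 'a option set" where
  "vert G = Some ` carrier G \<union> {None}"

definition complete_edges :: "'v set \<Rightarrow> 'v set set" where
  "complete_edges V = {e. \<exists>u v. u \<in> V \<and> v \<in> V \<and> u \<noteq> v \<and> e = {u, v}}"

definition degree :: "'v set set \<Rightarrow> 'v \<Rightarrow> nat" where
  "degree F v = card {e \<in> F. v \<in> e}"

definition is_k_factor :: "nat \<Rightarrow> 'v set \<Rightarrow> 'v set set \<Rightarrow> bool" where
  "is_k_factor k V F \<longleftrightarrow> F \<subseteq> complete_edges V \<and> (\<forall>v\<in>V. degree F v = k)"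

definition is_k_factorization :: "nat \<Rightarrow> 'v set \<Rightarrow> 'v set set set \<Rightarrow> bool" where
  "is_k_factorization k V FF \<longleftrightarrow>
     (\<forall>F\<in>FF. is_k_factor k V F) \<and> \<Union>FF = complete_edges V \<and>
     (\<forall>F1\<in>FF. \<forall>F2\<in>FF. F1 \<noteq> F2 \<longrightarrow> F1 \<inter> F2 = {})"

definition vact :: "('a, 'b) monoid_scheme \<Rightarrow> 'a option \<Rightarrow> 'a \<Rightarrow> 'a option" where
  "vact G v g = map_option (\<lambda>x. x \<otimes>\<^bsub>G\<^esub> g) v"

definition graph_act :: "('a, 'b) monoid_scheme \<Rightarrow> 'a option set set \<Rightarrow> 'a \<Rightarrow> 'a option set set" where
  "graph_act G F g = (\<lambda>e. (\<lambda>v. vact G v g) ` e) ` F"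

definition one_rotational_k_factorization ::
  "('a, 'b) monoid_scheme \<Rightarrow> nat \<Rightarrow> 'a option set set set \<Rightarrow> bool" where
  "one_rotational_k_factorization G k FF \<longleftrightarrow>
     is_k_factorization k (vert G) FF \<and>
     (\<forall>F\<in>FF. \<forall>g\<in>carrier G. graph_act G F g \<in> FF)"

definition G_stabilizer :: "('a, 'b) monoid_scheme \<Rightarrow> 'a option set set \<Rightarrow> 'a set" where
  "G_stabilizer G F = {g \<in> carrier G. graph_act G F g = F}"

definition involution :: "('a, 'b) monoid_scheme \<Rightarrow> 'a \<Rightarrow> bool" where
  "involution G t \<longleftrightarrow> t \<in> carrier G \<and> group.ord G t = 2"

end

theory Submission
  imports Defs
begin

text \<open>Since the factors partition the edges and G permutes the factors, a translate Fg is the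
  unique factor containing any one of its edges. Every non-empty factor contains an edge at
  infinity, and translating {\<infinity>, a} to {\<infinity>, b} shows that all non-empty factors form a single
  G-orbit (an empty factor, possible only for k = 0, is stabilised by all of G). For an
  involution t, the edge {1, t} is mapped to {t, 1} by t, so t stabilises the factor F'
  containing it; writing F' = Fg, the conjugate g t g\<inverse> stabilises F.\<close>

lemma vact_mult:
  assumes "group G" "v \<in> vert G" "g \<in> carrier G" "h \<in> carrier G"
  shows "vact G (vact G v g) h = vact G v (g \<otimes>\<^bsub>G\<^esub> h)"
  using assms by (auto simp: vact_def vert_def group.is_monoid monoid.m_assoc)

lemma vact_one:
  assumes "group G" "v \<in> vert G"
  shows "vact G v \<one>\<^bsub>G\<^esub> = v"
  using assms by (auto simp: vact_def vert_def group.is_monoid monoid.r_one)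

lemma graph_act_mult:
  assumes "group G" "\<Union>F \<subseteq> vert G" "g \<in> carrier G" "h \<in> carrier G"
  shows "graph_act G (graph_act G F g) h = graph_act G F (g \<otimes>\<^bsub>G\<^esub> h)"
proof -
  have "(\<lambda>v. vact G v h) ` (\<lambda>v. vact G v g) ` e = (\<lambda>v. vact G v (g \<otimes>\<^bsub>G\<^esub> h)) ` e"
    if "e \<in> F" for e
    using that assms vact_mult[OF assms(1) _ assms(3,4)] unfolding image_image
    by (auto intro!: image_cong)
  then show ?thesis unfolding graph_act_def image_image by (auto intro!: image_cong)
qed

lemma graph_act_one:
  assumes "group G" "\<Union>F \<subseteq> vert G"
  shows "graph_act G F \<one>\<^bsub>G\<^esub> = F"
proof -
  have "(\<lambda>v. vact G v \<one>\<^bsub>G\<^esub>) ` e = e" if "e \<in> F" for e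
    using that assms vact_one[OF assms(1)] by (auto simp: image_iff) (metis subsetD UnionI)
  then show ?thesis unfolding graph_act_def by simp
qed

lemma conj_mem_G_stabilizer:
  fixes G (structure)
  assumes "group G" "\<Union>F \<subseteq> vert G" "g \<in> carrier G"
    and "t \<in> G_stabilizer G (graph_act G F g)"
  shows "g \<otimes> t \<otimes> inv g \<in> G_stabilizer G F"
proof -
  interpret group G by fact
  have t: "t \<in> carrier G" and Fgt: "graph_act G (graph_act G F g) t = graph_act G F g"
    using assms(4) by (auto simp: G_stabilizer_def)
  have "graph_act G F (g \<otimes> t \<otimes> inv g) = graph_act G (graph_act G (graph_act G F g) t) (inv g)"
    using assms(1-3) t by (simp add: graph_act_mult)
  also have "\<dots> = graph_act G (graph_act G F g) (inv g)"
    using Fgt by simp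
  also have "\<dots> = F"
    using assms(1-3) by (simp add: graph_act_mult graph_act_one)
  finally show ?thesis
    using assms(3) t by (simp add: G_stabilizer_def)
qed

lemma k_factorization_edges_subset_vert:
  assumes "is_k_factorization k V FF" "F \<in> FF"
  shows "\<Union>F \<subseteq> V"
  using assms by (auto simp: is_k_factorization_def is_k_factor_def complete_edges_def)

lemma k_factorization_factor_eqI:
  assumes "is_k_factorization k V FF" "F1 \<in> FF" "F2 \<in> FF" "e \<in> F1" "e \<in> F2"
  shows "F1 = F2"
  using assms unfolding is_k_factorization_def by blast

lemma one_rotational_graph_act_eqI:
  assumes "one_rotational_k_factorization G k FF" "F \<in> FF" "F' \<in> FF" "g \<in> carrier G"
    and "e \<in> F" "(\<lambda>v. vact G v g) ` e \<in> F'"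
  shows "graph_act G F g = F'"
proof (rule k_factorization_factor_eqI)
  show "is_k_factorization k (vert G) FF" "graph_act G F g \<in> FF"
    using assms(1,2,4) by (auto simp: one_rotational_k_factorization_def)
  show "(\<lambda>v. vact G v g) ` e \<in> graph_act G F g"
    using assms(5) by (auto simp: graph_act_def)
qed (use assms in auto)

lemma finite_complete_edges: "finite V \<Longrightarrow> finite (complete_edges V)"
  by (rule finite_subset[of _ "Pow V"]) (auto simp: complete_edges_def)

lemma k_factor_has_edge_at_infinity:
  assumes "finite (carrier G)" "is_k_factor k (vert G) F" "F \<noteq> {}"
  shows "\<exists>a\<in>carrier G. {None, Some a} \<in> F"
proof -
  have sub: "F \<subseteq> complete_edges (vert G)" and deg: "\<forall>v\<in>vert G. degree F v = k"
    using assms(2) by (auto simp: is_k_factor_def)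
  have "finite (vert G)"
    using assms(1) by (simp add: vert_def)
  then have fin: "finite F"
    using sub finite_complete_edges finite_subset by blast
  obtain e0 where "e0 \<in> F"
    using assms(3) by blast
  moreover obtain u v where "u \<in> vert G" "e0 = {u, v}"
    using \<open>e0 \<in> F\<close> sub unfolding complete_edges_def by blast
  ultimately have "0 < card {e \<in> F. u \<in> e}"
    using fin by (subst card_gt_0_iff) auto
  then have "k > 0"
    using deg \<open>u \<in> vert G\<close> unfolding degree_def by simp
  moreover have "degree F None = k"
    using deg by (simp add: vert_def)
  ultimately have "{e \<in> F. None \<in> e} \<noteq> {}"
    unfolding degree_def by force
  then obtain e where e: "e \<in> F" "None \<in> e"
    by blast
  obtain p q where "p \<in> vert G" "q \<in> vert G" "p \<noteq> q" "e = {p, q}"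
    using e(1) sub unfolding complete_edges_def by blast
  then have "\<exists>a\<in>carrier G. e = {None, Some a}"
    using e(2) unfolding vert_def by auto
  then show ?thesis
    using e(1) by blast
qed

lemma one_rotational_nonempty_factors_single_orbit:
  fixes G (structure)
  assumes "group G" "finite (carrier G)" "one_rotational_k_factorization G k FF"
    and "F \<in> FF" "F \<noteq> {}" "F' \<in> FF" "F' \<noteq> {}"
  shows "\<exists>g\<in>carrier G. graph_act G F g = F'"
proof -
  interpret group G by fact
  have "is_k_factor k (vert G) F" "is_k_factor k (vert G) F'"
    using assms(3,4,6) by (auto simp: one_rotational_k_factorization_def is_k_factorization_def)
  then obtain a b where ab: "a \<in> carrier G" "{None, Some a} \<in> F" "b \<in> carrier G" "{None, Some b} \<in> F'"
    using k_factor_has_edge_at_infinity assms(2,5,7) by metis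
  have "(\<lambda>v. vact G v (inv a \<otimes> b)) ` {None, Some a} = {None, Some b}"
    using ab by (simp add: vact_def m_assoc[symmetric])
  then have "graph_act G F (inv a \<otimes> b) = F'"
    using ab assms(3,4,6) by (intro one_rotational_graph_act_eqI[where e = "{None, Some a}"]) auto
  then show ?thesis
    using ab by blast
qed

lemma involution_fixes_edge:
  fixes G (structure)
  assumes "group G" "involution G t"
  shows "(\<lambda>v. vact G v t) ` {Some \<one>, Some t} = {Some \<one>, Some t}"
proof -
  interpret group G by fact
  have t: "t \<in> carrier G" "ord t = 2"
    using assms(2) by (auto simp: involution_def)
  then have "t \<otimes> t = \<one>"
    using pow_ord_eq_1[OF t(1)] by (simp add: numeral_2_eq_2)
  then show ?thesis
    using t by (auto simp: vact_def)
qed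

lemma involution_stabilizes_factor:
  fixes G (structure)
  assumes "group G" "one_rotational_k_factorization G k FF" "involution G t"
  obtains F' where "F' \<in> FF" "F' \<noteq> {}" "t \<in> G_stabilizer G F'"
proof -
  interpret group G by fact
  have t: "t \<in> carrier G" "t \<noteq> \<one>"
    using assms(3) ord_eq_1 by (auto simp: involution_def)
  have fact: "is_k_factorization k (vert G) FF"
    using assms(2) by (simp add: one_rotational_k_factorization_def)
  have "{Some \<one>, Some t} \<in> complete_edges (vert G)"
    using t by (auto simp: complete_edges_def vert_def)
  then obtain F' where F': "F' \<in> FF" "{Some \<one>, Some t} \<in> F'"
    using fact unfolding is_k_factorization_def by blast
  then have "graph_act G F' t = F'"
    using involution_fixes_edge[OF assms(1,3)] assms(2) t
    by (intro one_rotational_graph_act_eqI[where e = "{Some \<one>, Some t}"]) auto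
  with F' t show ?thesis
    by (intro that) (auto simp: G_stabilizer_def)
qed

theorem mainTheorem2:
  fixes G :: "('a, 'b) monoid_scheme" and k :: nat and FF :: "'a option set set set"
  assumes "group G"
    and "finite (carrier G)"
    and "even (order G)"
    and "one_rotational_k_factorization G k FF"
  shows "\<forall>F\<in>FF. \<forall>t. involution G t \<longrightarrow>
           (\<exists>x\<in>carrier G. inv\<^bsub>G\<^esub> x \<otimes>\<^bsub>G\<^esub> t \<otimes>\<^bsub>G\<^esub> x \<in> G_stabilizer G F)"
proof (intro ballI allI impI)
  fix F t
  assume F: "F \<in> FF" and t: "involution G t"
  interpret group G by fact
  have tG: "t \<in> carrier G"
    using t by (simp add: involution_def)
  show "\<exists>x\<in>carrier G. inv\<^bsub>G\<^esub> x \<otimes>\<^bsub>G\<^esub> t \<otimes>\<^bsub>G\<^esub> x \<in> G_stabilizer G F"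
  proof (cases "F = {}")
    case True
    then show ?thesis
      using tG by (intro bexI[of _ "\<one>\<^bsub>G\<^esub>"]) (auto simp: G_stabilizer_def graph_act_def)
  next
    case False
    obtain F' where F': "F' \<in> FF" "F' \<noteq> {}" "t \<in> G_stabilizer G F'"
      using involution_stabilizes_factor[OF assms(1,4) t] .
    then obtain g where g: "g \<in> carrier G" "graph_act G F g = F'"
      using one_rotational_nonempty_factors_single_orbit[OF assms(1,2,4) F False] by blast
    have "\<Union>F \<subseteq> vert G"
      using assms(4) F by (intro k_factorization_edges_subset_vert) (auto simp: one_rotational_k_factorization_def)
    then have "g \<otimes>\<^bsub>G\<^esub> t \<otimes>\<^bsub>G\<^esub> inv\<^bsub>G\<^esub> g \<in> G_stabilizer G F"
      using conj_mem_G_stabilizer[OF assms(1) _ g(1)] g(2) F'(3) by blast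
    then show ?thesis
      using g by (intro bexI[of _ "inv\<^bsub>G\<^esub> g"]) auto
  qed
qed

end
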